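(* Let $A$ and $B$ be cofinite directed posets of infinite height. Then the poset of strictly increasing functions $B\to A$, ordered by $\alpha'\geq\alpha$ iff $\alpha'(b)\geq\alpha(b)$ for all $b\in B$, is directed and of infinite height.
   Context: A poset is cofinite if for every $x$ the set $\{z\mid z\le x\}$ is finite; directed if it is nonempty and any two elements have a common upper bound; of infinite height if for every $a$ there is $a'$ with $a<a'$. *)

theory Defs
  imports Main
begin

text \<open>Posets are types of class order. Properties are stated relative to a carrier set S
  with the ambient order, so they apply both to whole types (S = UNIV) and to subposets.\<close>

definition cofinite_poset :: "'a::order set \<Rightarrow> bool" where
  "cofinite_poset S \<longleftrightarrow> (\<forall>x\<in>S. finite {z\<in>S. z \<le> x})"

definition directed_poset :: "'a::order set \<Rightarrow> bool" where
  "directed_poset S \<longleftrightarrow> S \<noteq> {} \<and> (\<forall>x\<in>S. \<forall>y\<in>S. \<exists>z\<in>S. x \<le> z \<and> y \<le> z)"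

definition infinite_height :: "'a::order set \<Rightarrow> bool" where
  "infinite_height S \<longleftrightarrow> (\<forall>a\<in>S. \<exists>a'\<in>S. a < a')"

end

theory Submission
  imports Defs
begin

text \<open>Everything rests on one construction: every \<open>h :: 'b \<Rightarrow> 'a\<close> is pointwise strictly
  below some strictly increasing \<open>g\<close>. Since \<open>B\<close> is cofinite, \<open><\<close> is well-founded on \<open>B\<close> and
  every \<open>b\<close> has finitely many predecessors, so \<open>g\<close> can be defined by well-founded recursion,
  choosing \<open>g b\<close> strictly above \<open>h b\<close> and the finitely many values \<open>g b'\<close>, \<open>b' < b\<close>; such a
  strict upper bound exists because \<open>A\<close> is directed and of infinite height. Applied to a
  pointwise common upper bound of two increasing maps this gives directedness, applied to a
  single increasing map it gives a strictly larger one.\<close>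

lemma directed_poset_finite_upper_bound:
  assumes "directed_poset S" "finite X" "X \<subseteq> S"
  shows "\<exists>u\<in>S. \<forall>x\<in>X. x \<le> u"
  using assms(2,3)
proof (induction X rule: finite_induct)
  case empty
  then show ?case using assms(1) by (auto simp: directed_poset_def)
next
  case (insert x X)
  then obtain u where "u \<in> S" "\<forall>y\<in>X. y \<le> u" by auto
  moreover obtain z where "z \<in> S" "x \<le> z" "u \<le> z"
    using assms(1) insert.prems \<open>u \<in> S\<close> unfolding directed_poset_def by blast
  ultimately show ?case using order_trans by blast
qed

lemma directed_poset_finite_strict_upper_bound:
  assumes "directed_poset S" "infinite_height S" "finite X" "X \<subseteq> S"
  shows "\<exists>u\<in>S. \<forall>x\<in>X. x < u"
proof -
  obtain u where "u \<in> S" "\<forall>x\<in>X. x \<le> u"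
    using directed_poset_finite_upper_bound[OF assms(1,3,4)] by blast
  moreover obtain v where "v \<in> S" "u < v"
    using assms(2) \<open>u \<in> S\<close> unfolding infinite_height_def by blast
  ultimately show ?thesis by (meson order_le_less_trans)
qed

lemma cofinite_poset_finite_less: "cofinite_poset (UNIV :: 'a::order set) \<Longrightarrow> finite {z :: 'a. z < x}"
  unfolding cofinite_poset_def by (rule finite_subset[of _ "{z. z \<le> x}"]) auto

lemma cofinite_poset_wf_less:
  "cofinite_poset (UNIV :: 'a::order set) \<Longrightarrow> wf {(x :: 'a, y). x < y}"
  by (rule wf_finite_segments) (auto simp: irrefl_def trans_def cofinite_poset_finite_less)

lemma strict_mono_above:
  fixes h :: "'b::order \<Rightarrow> 'a::order"
  assumes "cofinite_poset (UNIV :: 'b set)"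
    and "directed_poset (UNIV :: 'a set)" "infinite_height (UNIV :: 'a set)"
  obtains g where "strict_mono g" "\<And>b. h b < g b"
proof -
  define bounds where "bounds f b = insert (h b) (f ` {b'. b' < b})" for f b
  define step where "step f b = (SOME u. \<forall>x\<in>bounds f b. x < u)" for f b
  define g where "g = wfrec {(x, y). x < y} step"
  have "adm_wf {(x, y). x < y} step"
    unfolding adm_wf_def step_def bounds_def by (simp cong: image_cong)
  then have g_step: "g = step g"
    unfolding g_def by (rule wfrec_fixpoint[OF cofinite_poset_wf_less[OF assms(1)]])
  have above_bounds: "x < g b" if "x \<in> bounds g b" for x b
  proof -
    have "finite (bounds g b)"
      unfolding bounds_def using cofinite_poset_finite_less[OF assms(1)] by simp
    then have "\<exists>u. \<forall>x\<in>bounds g b. x < u"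
      using directed_poset_finite_strict_upper_bound[OF assms(2,3)] by blast
    then have "\<forall>x\<in>bounds g b. x < step g b"
      unfolding step_def by (rule someI_ex)
    then show ?thesis using that g_step by metis
  qed
  show thesis
  proof
    show "strict_mono g"
      by (rule strict_monoI) (simp add: above_bounds bounds_def)
    show "h b < g b" for b
      by (simp add: above_bounds bounds_def)
  qed
qed

lemma less_fun_if_pointwise_less:
  fixes f g :: "'a \<Rightarrow> 'b::order"
  assumes "\<And>x. f x < g x"
  shows "f < g"
  using assms by (simp add: less_fun_def le_fun_def less_imp_le) (meson leD)

theorem lemma3p17:
  assumes "cofinite_poset (UNIV :: 'a::order set)" "directed_poset (UNIV :: 'a set)"
    "infinite_height (UNIV :: 'a set)"
  and "cofinite_poset (UNIV :: 'b::order set)" "directed_poset (UNIV :: 'b set)"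
    "infinite_height (UNIV :: 'b set)"
  shows "directed_poset {f :: 'b \<Rightarrow> 'a. strict_mono f}
     \<and> infinite_height {f :: 'b \<Rightarrow> 'a. strict_mono f}"
proof
  note above = strict_mono_above[OF assms(4) assms(2,3)]
  show "directed_poset {f :: 'b \<Rightarrow> 'a. strict_mono f}"
    unfolding directed_poset_def
  proof (intro conjI ballI)
    obtain g :: "'b \<Rightarrow> 'a" where "strict_mono g" using above by blast
    then show "{f :: 'b \<Rightarrow> 'a. strict_mono f} \<noteq> {}" by blast
  next
    fix f f' :: "'b \<Rightarrow> 'a"
    have "\<forall>b. \<exists>u. f b \<le> u \<and> f' b \<le> u"
      using assms(2) unfolding directed_poset_def by blast
    then obtain h where h: "\<And>b. f b \<le> h b \<and> f' b \<le> h b" by metis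
    obtain g where "strict_mono g" "\<And>b. h b < g b" using above by blast
    then show "\<exists>g\<in>{f. strict_mono f}. f \<le> g \<and> f' \<le> g"
      using h by (meson le_funI less_imp_le mem_Collect_eq order_trans)
  qed
  show "infinite_height {f :: 'b \<Rightarrow> 'a. strict_mono f}"
    unfolding infinite_height_def
  proof
    fix f :: "'b \<Rightarrow> 'a"
    obtain g where "strict_mono g" "\<And>b. f b < g b" using above by blast
    then show "\<exists>g\<in>{f. strict_mono f}. f < g" by (auto intro: less_fun_if_pointwise_less)
  qed
qed

end
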